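(* Let $p\ge1$, let $A:\mathbb{R}\to\mathbb{R}$, and let $\boldsymbol{x},\boldsymbol{w}\in\mathbb{R}^p$ be such that $x_jw_j\neq0$ for some $j$. For $\tau\in(0,1)$ and $c\in(0,+\infty)$ define $\theta=\boldsymbol{w}^T\boldsymbol{x}$, $s_j=\mathrm{sgn}(w_j)$ (with $\mathrm{sgn}(0)=0$), $q_j=x_j(w_j+cs_j)$, $\theta_{j-}=\theta-q_j$, $\theta_{j+}=\theta+\frac{\tau}{1-\tau}q_j$, and $$\pi(\boldsymbol{w})=\pi_{\tau,c}(\boldsymbol{w})=\tau\sum_{j=1}^{p}A(\theta_{j-})+(1-\tau)\sum_{j=1}^{p}A(\theta_{j+})-pA(\theta).$$ Then: (i) if $A$ is convex, $\pi(\boldsymbol{w})$ is monotonically increasing as a function of $\tau\in(0,1)$ (for fixed $c$); (ii) if $A$ is twice differentiable with $A''(\theta)>0$ for all $\theta$, then $\pi(\boldsymbol{w})$ is monotonically increasing as a function of $c\in(0,+\infty)$ (for fixed $\tau$).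
   Context: $\pi$ is the Shakeout regularizer of a generalized linear model with log-partition function $A$, Shakeout hyper-parameters $\tau$ and $c$, and feature vector $\boldsymbol{x}$. *)

theory Defs
  imports "HOL-Analysis.Analysis"
begin

text \<open>Shakeout regularizer pi_{tau,c}(w) for a GLM with log-partition A and feature x in R^p
  (p = CARD('n)). sgn on reals satisfies sgn 0 = 0.\<close>

definition shakeout_pi :: "(real \<Rightarrow> real) \<Rightarrow> real \<Rightarrow> real \<Rightarrow> real^'n \<Rightarrow> real^'n \<Rightarrow> real" where
  "shakeout_pi A \<tau> c x w =
    (let \<theta> = w \<bullet> x;
         q = (\<lambda>j. x $ j * (w $ j + c * sgn (w $ j)))
     in \<tau> * (\<Sum>j\<in>UNIV. A (\<theta> - q j))
        + (1 - \<tau>) * (\<Sum>j\<in>UNIV. A (\<theta> + \<tau> / (1 - \<tau>) * q j))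
        - real CARD('n) * A \<theta>)"

end

theory Submission
  imports Defs
begin

text \<open>Each pair of summands of the regularizer is \<open>E A(\<theta> + q Z)\<close> for the mean-zero variable
  \<open>Z\<close> equal to \<open>-1\<close> with probability \<open>\<tau>\<close> and to \<open>\<tau>/(1-\<tau>)\<close> with probability \<open>1-\<tau>\<close>. For convex
  \<open>A\<close> such an expectation grows when \<open>Z\<close> is spread out. Raising \<open>\<tau>\<close> moves the upper atom
  outwards, and the old atom is a convex combination of the new one and \<open>-1\<close>. Raising \<open>c\<close>
  multiplies \<open>q\<close> by the factor \<open>\<bar>w\<^sub>j\<bar> + c\<close>, and \<open>s \<mapsto> E A(\<theta> + s Z)\<close> is nondecreasing for
  \<open>s \<ge> 0\<close> because it lies above its value \<open>A \<theta>\<close> at \<open>s = 0\<close> (Jensen) and is convex.\<close>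

definition shakeout_term :: "(real \<Rightarrow> real) \<Rightarrow> real \<Rightarrow> real \<Rightarrow> real \<Rightarrow> real" where
  "shakeout_term A \<tau> \<theta> q = \<tau> * A (\<theta> - q) + (1 - \<tau>) * A (\<theta> + \<tau> / (1 - \<tau>) * q)"

lemma shakeout_pi_eq_sum_shakeout_term:
  fixes x w :: "real^'n"
  shows "shakeout_pi A \<tau> c x w =
     (\<Sum>j\<in>UNIV. shakeout_term A \<tau> (w \<bullet> x) (x $ j * (w $ j + c * sgn (w $ j))))
     - real CARD('n) * A (w \<bullet> x)"
  unfolding shakeout_pi_def shakeout_term_def Let_def
  by (simp add: sum.distrib sum_distrib_left)

lemma shakeout_term_mono_prob:
  fixes A :: "real \<Rightarrow> real"
  assumes cv: "convex_on UNIV A" and t: "0 < t1" "t1 \<le> t2" "t2 < 1"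
  shows "shakeout_term A t1 \<theta> q \<le> shakeout_term A t2 \<theta> q"
proof -
  define l where "l = (t2 - t1) / (1 - t1)"
  have ne: "1 - t1 \<noteq> 0" "1 - t2 \<noteq> 0" using t by auto
  have l_bounds: "0 \<le> l" "l \<le> 1" unfolding l_def using t by (auto simp: divide_simps)
  have one_minus_l: "1 - l = (1 - t2) / (1 - t1)"
    unfolding l_def using ne by (simp add: field_simps)
  have weights: "(1 - t1) * (1 - l) = 1 - t2" "(1 - t1) * l = t2 - t1"
    using one_minus_l ne by (simp_all add: field_simps)
  have "(1 - l) * (t2 / (1 - t2)) - l = t1 / (1 - t1)"
    using one_minus_l ne unfolding l_def by (simp add: diff_divide_distrib[symmetric])
  moreover have "(1 - l) *\<^sub>R (\<theta> + t2 / (1 - t2) * q) + l *\<^sub>R (\<theta> - q)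
      = \<theta> + ((1 - l) * (t2 / (1 - t2)) - l) * q"
    by (simp add: algebra_simps)
  ultimately have combination:
    "(1 - l) *\<^sub>R (\<theta> + t2 / (1 - t2) * q) + l *\<^sub>R (\<theta> - q) = \<theta> + t1 / (1 - t1) * q"
    by simp
  have "A (\<theta> + t1 / (1 - t1) * q) \<le> (1 - l) * A (\<theta> + t2 / (1 - t2) * q) + l * A (\<theta> - q)"
    using convex_onD[OF cv l_bounds UNIV_I UNIV_I, of "\<theta> + t2 / (1 - t2) * q" "\<theta> - q"]
    by (simp only: combination)
  then have "(1 - t1) * A (\<theta> + t1 / (1 - t1) * q)
      \<le> (1 - t1) * ((1 - l) * A (\<theta> + t2 / (1 - t2) * q) + l * A (\<theta> - q))"
    using t by (intro mult_left_mono) auto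
  also have "\<dots> = (1 - t2) * A (\<theta> + t2 / (1 - t2) * q) + (t2 - t1) * A (\<theta> - q)"
    by (simp only: distrib_left mult.assoc[symmetric] weights)
  finally show ?thesis unfolding shakeout_term_def by (simp add: algebra_simps)
qed

lemma convex_le_shakeout_term:
  fixes A :: "real \<Rightarrow> real"
  assumes cv: "convex_on UNIV A" and t: "0 < t" "t < 1"
  shows "A \<theta> \<le> shakeout_term A t \<theta> q"
proof -
  have t_bounds: "0 \<le> 1 - t" "1 - t \<le> 1" using t by auto
  have mean: "(1 - (1 - t)) *\<^sub>R (\<theta> - q) + (1 - t) *\<^sub>R (\<theta> + t / (1 - t) * q) = \<theta>"
    using t by (simp add: field_simps)
  show ?thesis
    using convex_onD[OF cv t_bounds UNIV_I UNIV_I, of "\<theta> - q" "\<theta> + t / (1 - t) * q"]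
    unfolding mean shakeout_term_def by simp
qed

lemma shakeout_term_mono_scale:
  fixes A :: "real \<Rightarrow> real"
  assumes cv: "convex_on UNIV A" and t: "0 < t" "t < 1" and s: "0 \<le> s1" "s1 \<le> s2"
  shows "shakeout_term A t \<theta> (s1 * r) \<le> shakeout_term A t \<theta> (s2 * r)"
proof (cases "s2 = 0")
  case True
  then show ?thesis using s by simp
next
  case False
  define m where "m = s1 / s2"
  have m_bounds: "0 \<le> m" "m \<le> 1" unfolding m_def using s False by auto
  have jensen: "A (\<theta> + d * (s1 * r)) \<le> (1 - m) * A \<theta> + m * A (\<theta> + d * (s2 * r))" for d
  proof -
    have "(1 - m) *\<^sub>R \<theta> + m *\<^sub>R (\<theta> + d * (s2 * r)) = \<theta> + d * (s1 * r)"
      unfolding m_def using False by (simp add: field_simps)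
    then show ?thesis
      using convex_onD[OF cv m_bounds UNIV_I UNIV_I, of \<theta> "\<theta> + d * (s2 * r)"] by simp
  qed
  have "shakeout_term A t \<theta> (s1 * r)
      = t * A (\<theta> + (-1) * (s1 * r)) + (1 - t) * A (\<theta> + t / (1 - t) * (s1 * r))"
    unfolding shakeout_term_def by simp
  also have "\<dots> \<le> t * ((1 - m) * A \<theta> + m * A (\<theta> + (-1) * (s2 * r)))
      + (1 - t) * ((1 - m) * A \<theta> + m * A (\<theta> + t / (1 - t) * (s2 * r)))"
    using t by (intro add_mono mult_left_mono jensen) auto
  also have "\<dots> = (1 - m) * A \<theta> + m * shakeout_term A t \<theta> (s2 * r)"
    unfolding shakeout_term_def by (simp add: algebra_simps)
  also have "\<dots> \<le> shakeout_term A t \<theta> (s2 * r)"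
  proof -
    have "(1 - m) * A \<theta> \<le> (1 - m) * shakeout_term A t \<theta> (s2 * r)"
      using convex_le_shakeout_term[OF cv t] m_bounds by (intro mult_left_mono) auto
    then show ?thesis by (simp add: left_diff_distrib)
  qed
  finally show ?thesis .
qed

lemma shakeout_term_mono_penalty:
  fixes A :: "real \<Rightarrow> real"
  assumes cv: "convex_on UNIV A" and t: "0 < t" "t < 1" and c: "0 \<le> c1" "c1 \<le> c2"
  shows "shakeout_term A t \<theta> (x * (w + c1 * sgn w)) \<le> shakeout_term A t \<theta> (x * (w + c2 * sgn w))"
proof (cases "w = 0")
  case False
  then have weight: "x * (w + c * sgn w) = (\<bar>w\<bar> + c) * (x * sgn w)" for c
    by (cases "w > 0") (auto simp: algebra_simps)
  show ?thesis
    unfolding weight using c by (intro shakeout_term_mono_scale[OF cv t]) auto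
qed simp

lemma shakeout_pi_mono_prob:
  assumes "convex_on UNIV A"
  shows "mono_on {0<..<1} (\<lambda>\<tau>. shakeout_pi A \<tau> c x w)"
  by (rule mono_onI) (auto simp: shakeout_pi_eq_sum_shakeout_term
      intro!: diff_right_mono sum_mono shakeout_term_mono_prob[OF assms])

lemma shakeout_pi_mono_penalty:
  assumes "convex_on UNIV A" and "0 < \<tau>" "\<tau> < 1"
  shows "mono_on {0..} (\<lambda>c. shakeout_pi A \<tau> c x w)"
  by (rule mono_onI) (auto simp: shakeout_pi_eq_sum_shakeout_term
      intro!: diff_right_mono sum_mono shakeout_term_mono_penalty[OF assms])

theorem proposition3:
  fixes A :: "real \<Rightarrow> real" and x w :: "real^'n"
  assumes "\<exists>j. x $ j * w $ j \<noteq> 0"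
  shows "(convex_on UNIV A \<longrightarrow>
           (\<forall>c>0. mono_on {0<..<1} (\<lambda>\<tau>. shakeout_pi A \<tau> c x w)))
       \<and> ((\<forall>t. A differentiable (at t)) \<and> (\<forall>t. deriv A differentiable (at t))
           \<and> (\<forall>t. deriv (deriv A) t > 0) \<longrightarrow>
           (\<forall>\<tau>\<in>{0<..<1}. mono_on {0<..} (\<lambda>c. shakeout_pi A \<tau> c x w)))"
proof (intro conjI impI allI ballI)
  show "mono_on {0<..<1} (\<lambda>\<tau>. shakeout_pi A \<tau> c x w)" if "convex_on UNIV A" for c
    using shakeout_pi_mono_prob[OF that] .
next
  fix \<tau> :: real
  assume A'': "(\<forall>t. A differentiable (at t)) \<and> (\<forall>t. deriv A differentiable (at t))
           \<and> (\<forall>t. deriv (deriv A) t > 0)" and "\<tau> \<in> {0<..<1}"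
  have "convex_on UNIV A"
    using A'' by (intro f''_ge0_imp_convex[where f' = "deriv A" and f'' = "deriv (deriv A)"])
      (auto simp: DERIV_deriv_iff_real_differentiable less_imp_le)
  with \<open>\<tau> \<in> {0<..<1}\<close> show "mono_on {0<..} (\<lambda>c. shakeout_pi A \<tau> c x w)"
    by (auto intro: mono_on_subset[OF shakeout_pi_mono_penalty])
qed

end
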